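(* For integers $j\ge 2$ let \[ I(j)=\left\lfloor \frac{1}{1+\sum_{k=2}^{j-1}\left\lfloor \frac{\gcd(k,j)}{k}\right\rfloor}\right\rfloor,\qquad S(i)=\sum_{j=2}^{i} I(j)\ (i\ge 1), \] and for integers $i\ge 1$, $x\ge 0$ let $A(i,x)=\left\lfloor \frac{1}{1+\lfloor S(i)/(x+1)\rfloor}\right\rfloor$. Then for all integers $x\ge 0$ and $i\ge 1$, $A(i,x)=1$ if $\pi(i)\le x$ and $A(i,x)=0$ otherwise.
   Context: $\pi(i)$ is the prime counting function. $\lfloor\cdot\rfloor$ is the floor function; empty sums are $0$. *)

theory Defs
  imports Complex_Main "HOL-Computational_Algebra.Primes"
begin

definition prime_pi :: "int \<Rightarrow> nat" where
  "prime_pi i = card {p :: nat. prime p \<and> int p \<le> i}"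

definition I_fun :: "int \<Rightarrow> int" where
  "I_fun j = \<lfloor>1 / (1 + real_of_int (\<Sum>k\<in>{2..j-1}. \<lfloor>real_of_int (gcd k j) / real_of_int k\<rfloor>))\<rfloor>"

definition S_fun :: "int \<Rightarrow> int" where
  "S_fun i = (\<Sum>j\<in>{2..i}. I_fun j)"

definition A_fun :: "int \<Rightarrow> int \<Rightarrow> int" where
  "A_fun i x = \<lfloor>1 / (1 + real_of_int \<lfloor>real_of_int (S_fun i) / real_of_int (x + 1)\<rfloor>)\<rfloor>"

end

theory Submission
  imports Defs
begin

text \<open>Each floor expression is an indicator: \<open>\<lfloor>1 / (1 + t)\<rfloor>\<close> detects \<open>t = 0\<close>,
  \<open>\<lfloor>gcd k j / k\<rfloor>\<close> detects \<open>k dvd j\<close>, and \<open>\<lfloor>s / (x + 1)\<rfloor>\<close> detects \<open>s > x\<close>.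
  Hence \<open>I(j)\<close> is the indicator of \<open>j\<close> having no divisor in \<open>[2, j - 1]\<close>, i.e. of
  primality, \<open>S(i) = \<pi>(i)\<close>, and \<open>A(i, x)\<close> tests \<open>\<pi>(i) \<le> x\<close>.\<close>

lemma floor_inverse_one_plus:
  fixes t :: real
  assumes "t \<ge> 0"
  shows "\<lfloor>1 / (1 + t)\<rfloor> = of_bool (t = 0)"
  using assms by (auto simp: floor_eq_iff divide_less_eq)

lemma floor_gcd_divide:
  fixes k j :: int
  assumes "k > 0"
  shows "\<lfloor>real_of_int (gcd k j) / real_of_int k\<rfloor> = of_bool (k dvd j)"
proof (cases "k dvd j")
  case False
  then have "gcd k j < k"
    using assms gcd_proj1_iff[of k j] by (simp add: order.strict_iff_order gcd_le1_int)
  then show ?thesis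
    using assms False by (simp add: floor_eq_iff divide_less_eq)
qed (use assms in simp)

lemma floor_divide_eq_0_iff:
  fixes s d :: int
  assumes "s \<ge> 0" and "d > 0"
  shows "\<lfloor>real_of_int s / real_of_int d\<rfloor> = 0 \<longleftrightarrow> s < d"
  using assms by (auto simp: floor_divide_of_int_eq zdiv_eq_0_iff)

lemma I_fun_eq_of_bool_prime:
  fixes j :: int
  assumes "j \<ge> 2"
  shows "I_fun j = of_bool (prime j)"
proof -
  have terms: "(\<Sum>k\<in>{2..j-1}. \<lfloor>real_of_int (gcd k j) / real_of_int k\<rfloor>)
      = (\<Sum>k\<in>{2..j-1}. of_bool (k dvd j))"
    by (intro sum.cong) (auto simp: floor_gcd_divide)
  have "(\<Sum>k\<in>{2..j-1}. of_bool (k dvd j) :: int) = 0 \<longleftrightarrow> (\<forall>k\<in>{2..j-1}. \<not> k dvd j)"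
    by (auto simp: sum_nonneg_eq_0_iff)
  also have "\<dots> \<longleftrightarrow> prime j"
    using assms by (auto simp: prime_int_iff')
  finally show ?thesis
    unfolding I_fun_def terms
    by (subst floor_inverse_one_plus) (auto intro: sum_nonneg)
qed

lemma S_fun_eq_prime_pi: "S_fun i = int (prime_pi i)"
proof -
  have "S_fun i = (\<Sum>j\<in>{2..i}. of_bool (prime j))"
    unfolding S_fun_def by (intro sum.cong) (auto simp: I_fun_eq_of_bool_prime)
  also have "\<dots> = int (card {j\<in>{2..i}. prime j})"
    by (simp add: sum.If_cases Int_def conj_commute)
  also have "{j\<in>{2..i}. prime j} = int ` {p. prime p \<and> int p \<le> i}"
    by (auto simp: image_iff prime_ge_0_int prime_ge_2_int prime_ge_2_nat intro!: exI[of _ "nat _"])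
  also have "card \<dots> = prime_pi i"
    by (simp add: card_image prime_pi_def)
  finally show ?thesis .
qed

theorem mainTheorem3:
  fixes i x :: int
  assumes "x \<ge> 0" and "i \<ge> 1"
  shows "A_fun i x = (if int (prime_pi i) \<le> x then 1 else 0)"
proof -
  let ?q = "\<lfloor>real_of_int (int (prime_pi i)) / real_of_int (x + 1)\<rfloor>"
  have "?q \<ge> 0"
    using assms(1) by simp
  then have "A_fun i x = of_bool (?q = 0)"
    unfolding A_fun_def S_fun_eq_prime_pi by (simp add: floor_inverse_one_plus)
  also have "?q = 0 \<longleftrightarrow> int (prime_pi i) \<le> x"
    using assms(1) by (subst floor_divide_eq_0_iff) auto
  finally show ?thesis
    by simp
qed

end
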